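(* Let $F,\theta \geq 1$ be integers with $F > 2\theta$. For $\rho \in [0,2^{-F})$, let $\eta_0(x)$, $\eta_0(x+1)$ be independent random elements of $\{0,1\}^F$, each with $P(\eta_0 = u) = 1/2 - (2^{F-1}-1)\rho$ for $u \in \{u_-,u_+\}$ and $P(\eta_0 = u) = \rho$ otherwise, where $u_- = (0,\ldots,0)$, $u_+ = (1,\ldots,1)$. Let $\zeta = H(\eta_0(x),\eta_0(x+1))$ and $\phi = -\zeta$ if $\zeta \leq \theta$, $\phi = \zeta - 2\theta$ if $\zeta > \theta$. Then there exists $\rho_0 > 0$ such that $E\phi > 0$ for all $\rho \in (0,\rho_0)$.
   Context: $H(u,v) = \#\{i : u_i \neq v_i\}$ denotes the Hamming distance on $\{0,1\}^F$. *)

theory Defs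
  imports Complex_Main
begin

text \<open>Elements of the cube {0,1}^F are represented as boolean lists of length F.\<close>
definition cube :: "nat \<Rightarrow> bool list set" where
  "cube F = {u. length u = F}"

definition hamming :: "bool list \<Rightarrow> bool list \<Rightarrow> nat" where
  "hamming u v = card {i. i < length u \<and> u ! i \<noteq> v ! i}"

definition eta_prob :: "nat \<Rightarrow> real \<Rightarrow> bool list \<Rightarrow> real" where
  "eta_prob F \<rho> u =
     (if u = replicate F False \<or> u = replicate F True
      then 1/2 - ((2::real) ^ (F - 1) - 1) * \<rho> else \<rho>)"

definition phi :: "nat \<Rightarrow> nat \<Rightarrow> real" where
  "phi \<theta> z = (if z \<le> \<theta> then - real z else real z - 2 * real \<theta>)"

definition expected_phi :: "nat \<Rightarrow> nat \<Rightarrow> real \<Rightarrow> real" where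
  "expected_phi F \<theta> \<rho> =
     (\<Sum>u\<in>cube F. \<Sum>v\<in>cube F. eta_prob F \<rho> u * eta_prob F \<rho> v * phi \<theta> (hamming u v))"

end

theory Submission
  imports Defs
begin

text \<open>\<open>E\<phi>\<close> is a polynomial in \<open>\<rho>\<close>, hence continuous. At \<open>\<rho> = 0\<close> the two sites are
  independent uniform picks from \<open>{u\<^sub>-, u\<^sub>+}\<close>, so \<open>\<zeta>\<close> is \<open>0\<close> or \<open>F\<close> with probability
  \<open>1/2\<close> each and \<open>E\<phi> = (F - 2\<theta>)/2 > 0\<close>; by continuity \<open>E\<phi>\<close> stays positive for small \<open>\<rho>\<close>.\<close>

lemma finite_cube: "finite (cube F)"
  using finite_lists_length_eq[of "UNIV :: bool set" F] by (simp add: cube_def)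

lemma hamming_self [simp]: "hamming u u = 0"
  by (simp add: hamming_def)

lemma hamming_replicate_False_True [simp]:
  "hamming (replicate F False) (replicate F True) = F"
  "hamming (replicate F True) (replicate F False) = F"
proof -
  have "{i. i < F \<and> replicate F b ! i \<noteq> replicate F (\<not> b) ! i} = {..<F}" for b
    by auto
  from this[of False] this[of True] show
    "hamming (replicate F False) (replicate F True) = F"
    "hamming (replicate F True) (replicate F False) = F"
    by (simp_all add: hamming_def)
qed

lemma isCont_eta_prob: "isCont (\<lambda>\<rho>. eta_prob F \<rho> u) \<rho>"
  unfolding eta_prob_def by (cases "u = replicate F False \<or> u = replicate F True") simp_all

lemma isCont_expected_phi: "isCont (expected_phi F \<theta>) \<rho>"
  unfolding expected_phi_def[abs_def] by (intro continuous_intros isCont_eta_prob)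

lemma eta_prob_0_eq_0:
  "u \<noteq> replicate F False \<Longrightarrow> u \<noteq> replicate F True \<Longrightarrow> eta_prob F 0 u = 0"
  by (simp add: eta_prob_def)

lemma expected_phi_0:
  assumes "F \<ge> 1"
  shows "expected_phi F \<theta> 0 = phi \<theta> F / 2"
proof -
  define S where "S = {replicate F False, replicate F True}"
  have distinct: "replicate F False \<noteq> replicate F True"
    using assms by (cases F) auto
  have "S \<subseteq> cube F"
    by (auto simp: S_def cube_def)
  then have restrict: "(\<Sum>u\<in>cube F. g u) = (\<Sum>u\<in>S. g u)"
    if "\<And>u. u \<notin> S \<Longrightarrow> g u = 0" for g :: "bool list \<Rightarrow> real"
    using that by (intro sum.mono_neutral_right finite_cube) auto
  have "expected_phi F \<theta> 0 =
      (\<Sum>u\<in>cube F. \<Sum>v\<in>S. eta_prob F 0 u * eta_prob F 0 v * phi \<theta> (hamming u v))"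
    unfolding expected_phi_def by (intro sum.cong refl restrict) (simp add: S_def eta_prob_0_eq_0)
  also have "\<dots> =
      (\<Sum>u\<in>S. \<Sum>v\<in>S. eta_prob F 0 u * eta_prob F 0 v * phi \<theta> (hamming u v))"
    by (intro restrict) (simp add: S_def eta_prob_0_eq_0)
  also have "\<dots> = phi \<theta> F / 2"
    using distinct by (simp add: S_def eta_prob_def phi_def)
  finally show ?thesis .
qed

theorem lemma10:
  fixes F \<theta> :: nat
  assumes "F \<ge> 1" and "\<theta> \<ge> 1" and "F > 2 * \<theta>"
  shows "\<exists>\<rho>0 > 0. \<forall>\<rho>::real. 0 < \<rho> \<and> \<rho> < \<rho>0 \<and> \<rho> < 1 / 2 ^ F \<longrightarrow> expected_phi F \<theta> \<rho> > 0"
proof -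
  have "expected_phi F \<theta> 0 > 0"
    using assms(3) by (simp add: expected_phi_0[OF assms(1)] phi_def)
  moreover have "(expected_phi F \<theta> \<longlongrightarrow> expected_phi F \<theta> 0) (at 0)"
    using isCont_expected_phi by (simp add: isCont_def)
  ultimately have "eventually (\<lambda>\<rho>. expected_phi F \<theta> \<rho> > 0) (at 0)"
    by (rule order_tendstoD(1)[rotated])
  then obtain d :: real where "d > 0" and "\<And>\<rho>. \<rho> \<noteq> 0 \<Longrightarrow> dist \<rho> 0 < d \<Longrightarrow> expected_phi F \<theta> \<rho> > 0"
    unfolding eventually_at by blast
  then show ?thesis
    by (intro exI[of _ d]) auto
qed

end
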